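(* Let $(G,\mathcal{P})$ and $(H,\mathcal{Q})$ be group pairs. (i) If $q\colon(G,\mathcal{P})\to(H,\mathcal{Q})$ is a quasi-isometry of pairs such that the projections $\dot q\to G/\mathcal{P}$ and $\dot q\to H/\mathcal{Q}$ are bijective, then $(G,\mathcal{P})$ and $(H,\mathcal{Q})$ are strongly quasi-isometric. (ii) If $(G,\mathcal{P})$ and $(H,\mathcal{Q})$ are strongly quasi-isometric, then they are quasi-isometric (i.e. there is a quasi-isometry of pairs between them).
   Context: A group pair $(G,\mathcal{P})$: $G$ finitely generated with a word metric for a finite generating set, $\mathcal{P}$ a non-empty finite collection of subgroups (repetitions allowed); $G/\mathcal{P}=\coprod_{P\in\mathcal{P}}G/P$, elements viewed as cosets (subsets of $G$). $f$ is $(L,C)$-Lipschitz if $d(f(x),f(x'))\le L\,d(x,x')+C$. Fix $L\ge1,C\ge0,M\ge0$. For $q\colon G\to H$ let $\dot q=\{(A,B)\in G/\mathcal{P}\times H/\mathcal{Q}: \text{Hausdorff distance in }H\text{ between }q(A)\text{ and }B\text{ is }<M\}$. An $(L,C,M)$-quasi-isometry of pairs is an $(L,C)$-quasi-isometry $q\colon G\to H$ such that both projections $\dot q\to G/\mathcal{P}$, $\dot q\to H/\mathcal{Q}$ are surjective. An $(L,C,M)$-Lipschitz map of pairs $f=(f_1,f_2)\colon(G,\mathcal{P})\to(H,\mathcal{Q})$ is an $(L,C)$-Lipschitz $f_1\colon G\to H$ and a function $f_2\colon G/\mathcal{P}\to H/\mathcal{Q}$ with Hausdorff distance between $f_1(A)$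 and $f_2(A)$ less than $M$ for all $A$. $(f,r)$ is an $(L,C,M)$-quasi-retraction of pairs if $f\colon(G,\mathcal{P})\to(H,\mathcal{Q})$, $r\colon(H,\mathcal{Q})\to(G,\mathcal{P})$ are such maps with $d_G(r_1f_1(g),g)\le C$ for all $g$ and $r_2\circ f_2=\mathrm{id}$. $f$ is a strong $(L,C,M)$-quasi-isometry of pairs if there is an $(L,C,M)$-Lipschitz map of pairs $r$ with $(f,r)$ and $(r,f)$ both $(L,C,M)$-quasi-retractions. Pairs are (strongly) quasi-isometric if such maps exist for some constants $L,C,M$. *)

theory Defs
  imports "HOL-Algebra.Algebra" "HOL-Library.Extended_Real"
begin

definition word_length :: "('a, 'b) monoid_scheme \<Rightarrow> 'a set \<Rightarrow> 'a \<Rightarrow> nat" where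
  "word_length G S g =
     (LEAST n. \<exists>ws. length ws = n \<and> set ws \<subseteq> S \<union> (m_inv G ` S) \<and>
                    foldr (\<lambda>x y. x \<otimes>\<^bsub>G\<^esub> y) ws \<one>\<^bsub>G\<^esub> = g)"

definition wdist :: "('a, 'b) monoid_scheme \<Rightarrow> 'a set \<Rightarrow> 'a \<Rightarrow> 'a \<Rightarrow> real" where
  "wdist G S x y = real (word_length G S (inv\<^bsub>G\<^esub> x \<otimes>\<^bsub>G\<^esub> y))"

definition hausdorff :: "('a, 'b) monoid_scheme \<Rightarrow> 'a set \<Rightarrow> 'a set \<Rightarrow> 'a set \<Rightarrow> ereal" where
  "hausdorff G S A B =
     max (SUP a\<in>A. INF b\<in>B. ereal (wdist G S a b)) (SUP b\<in>B. INF a\<in>A. ereal (wdist G S a b))"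

definition group_pair :: "('a, 'b) monoid_scheme \<Rightarrow> 'a set \<Rightarrow> 'a set list \<Rightarrow> bool" where
  "group_pair G S Ps \<longleftrightarrow> group G \<and> finite S \<and> S \<subseteq> carrier G \<and> generate G S = carrier G \<and>
     Ps \<noteq> [] \<and> (\<forall>P\<in>set Ps. subgroup P G)"

text \<open>G/P as a disjoint union: a coset gP_i is tagged with its index i.\<close>
definition cosets :: "('a, 'b) monoid_scheme \<Rightarrow> 'a set list \<Rightarrow> (nat \<times> 'a set) set" where
  "cosets G Ps = {(i, a <#\<^bsub>G\<^esub> (Ps ! i)) | i a. i < length Ps \<and> a \<in> carrier G}"

definition lipschitz_map ::
  "('a, 'b) monoid_scheme \<Rightarrow> 'a set \<Rightarrow> ('c, 'd) monoid_scheme \<Rightarrow> 'c set \<Rightarrow> real \<Rightarrow> real \<Rightarrow> ('a \<Rightarrow> 'c) \<Rightarrow> bool" where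
  "lipschitz_map G S H T L C f \<longleftrightarrow> f ` carrier G \<subseteq> carrier H \<and>
     (\<forall>x\<in>carrier G. \<forall>y\<in>carrier G. wdist H T (f x) (f y) \<le> L * wdist G S x y + C)"

definition quasi_isometry ::
  "('a, 'b) monoid_scheme \<Rightarrow> 'a set \<Rightarrow> ('c, 'd) monoid_scheme \<Rightarrow> 'c set \<Rightarrow> real \<Rightarrow> real \<Rightarrow> ('a \<Rightarrow> 'c) \<Rightarrow> bool" where
  "quasi_isometry G S H T L C q \<longleftrightarrow> q ` carrier G \<subseteq> carrier H \<and>
     (\<forall>x\<in>carrier G. \<forall>y\<in>carrier G.
        wdist G S x y / L - C \<le> wdist H T (q x) (q y) \<and> wdist H T (q x) (q y) \<le> L * wdist G S x y + C) \<and>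
     (\<forall>h\<in>carrier H. \<exists>g\<in>carrier G. wdist H T (q g) h \<le> C)"

definition qdot ::
  "('a, 'b) monoid_scheme \<Rightarrow> 'a set list \<Rightarrow> ('c, 'd) monoid_scheme \<Rightarrow> 'c set \<Rightarrow> 'c set list \<Rightarrow> real \<Rightarrow> ('a \<Rightarrow> 'c)
     \<Rightarrow> ((nat \<times> 'a set) \<times> (nat \<times> 'c set)) set" where
  "qdot G Ps H T Qs M q = {(A, B). A \<in> cosets G Ps \<and> B \<in> cosets H Qs \<and>
      hausdorff H T (q ` snd A) (snd B) < ereal M}"

definition qi_pairs ::
  "('a, 'b) monoid_scheme \<Rightarrow> 'a set \<Rightarrow> 'a set list \<Rightarrow> ('c, 'd) monoid_scheme \<Rightarrow> 'c set \<Rightarrow> 'c set list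
     \<Rightarrow> real \<Rightarrow> real \<Rightarrow> real \<Rightarrow> ('a \<Rightarrow> 'c) \<Rightarrow> bool" where
  "qi_pairs G S Ps H T Qs L C M q \<longleftrightarrow> quasi_isometry G S H T L C q \<and>
     fst ` qdot G Ps H T Qs M q = cosets G Ps \<and> snd ` qdot G Ps H T Qs M q = cosets H Qs"

definition lipschitz_pairs ::
  "('a, 'b) monoid_scheme \<Rightarrow> 'a set \<Rightarrow> 'a set list \<Rightarrow> ('c, 'd) monoid_scheme \<Rightarrow> 'c set \<Rightarrow> 'c set list
     \<Rightarrow> real \<Rightarrow> real \<Rightarrow> real \<Rightarrow> ('a \<Rightarrow> 'c) \<Rightarrow> (nat \<times> 'a set \<Rightarrow> nat \<times> 'c set) \<Rightarrow> bool" where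
  "lipschitz_pairs G S Ps H T Qs L C M f1 f2 \<longleftrightarrow> lipschitz_map G S H T L C f1 \<and>
     f2 ` cosets G Ps \<subseteq> cosets H Qs \<and>
     (\<forall>A\<in>cosets G Ps. hausdorff H T (f1 ` snd A) (snd (f2 A)) < ereal M)"

definition quasi_retraction_pairs ::
  "('a, 'b) monoid_scheme \<Rightarrow> 'a set \<Rightarrow> 'a set list \<Rightarrow> ('c, 'd) monoid_scheme \<Rightarrow> 'c set \<Rightarrow> 'c set list
     \<Rightarrow> real \<Rightarrow> real \<Rightarrow> real \<Rightarrow> ('a \<Rightarrow> 'c) \<Rightarrow> (nat \<times> 'a set \<Rightarrow> nat \<times> 'c set)
     \<Rightarrow> ('c \<Rightarrow> 'a) \<Rightarrow> (nat \<times> 'c set \<Rightarrow> nat \<times> 'a set) \<Rightarrow> bool" where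
  "quasi_retraction_pairs G S Ps H T Qs L C M f1 f2 r1 r2 \<longleftrightarrow>
     lipschitz_pairs G S Ps H T Qs L C M f1 f2 \<and> lipschitz_pairs H T Qs G S Ps L C M r1 r2 \<and>
     (\<forall>g\<in>carrier G. wdist G S (r1 (f1 g)) g \<le> C) \<and>
     (\<forall>A\<in>cosets G Ps. r2 (f2 A) = A)"

definition strong_qi_pairs ::
  "('a, 'b) monoid_scheme \<Rightarrow> 'a set \<Rightarrow> 'a set list \<Rightarrow> ('c, 'd) monoid_scheme \<Rightarrow> 'c set \<Rightarrow> 'c set list
     \<Rightarrow> real \<Rightarrow> real \<Rightarrow> real \<Rightarrow> ('a \<Rightarrow> 'c) \<Rightarrow> (nat \<times> 'a set \<Rightarrow> nat \<times> 'c set) \<Rightarrow> bool" where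
  "strong_qi_pairs G S Ps H T Qs L C M f1 f2 \<longleftrightarrow>
     (\<exists>r1 r2. lipschitz_pairs H T Qs G S Ps L C M r1 r2 \<and>
        quasi_retraction_pairs G S Ps H T Qs L C M f1 f2 r1 r2 \<and>
        quasi_retraction_pairs H T Qs G S Ps L C M r1 r2 f1 f2)"

definition pairs_quasi_isometric ::
  "('a, 'b) monoid_scheme \<Rightarrow> 'a set \<Rightarrow> 'a set list \<Rightarrow> ('c, 'd) monoid_scheme \<Rightarrow> 'c set \<Rightarrow> 'c set list \<Rightarrow> bool" where
  "pairs_quasi_isometric G S Ps H T Qs \<longleftrightarrow>
     (\<exists>L C M q. L \<ge> 1 \<and> C \<ge> 0 \<and> M \<ge> 0 \<and> qi_pairs G S Ps H T Qs L C M q)"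

definition pairs_strongly_quasi_isometric ::
  "('a, 'b) monoid_scheme \<Rightarrow> 'a set \<Rightarrow> 'a set list \<Rightarrow> ('c, 'd) monoid_scheme \<Rightarrow> 'c set \<Rightarrow> 'c set list \<Rightarrow> bool" where
  "pairs_strongly_quasi_isometric G S Ps H T Qs \<longleftrightarrow>
     (\<exists>L C M f1 f2. L \<ge> 1 \<and> C \<ge> 0 \<and> M \<ge> 0 \<and> strong_qi_pairs G S Ps H T Qs L C M f1 f2)"

end

theory Submission
  imports Defs
begin

text \<open>For (i), bijectivity of both projections makes \<^const>\<open>qdot\<close> the graph of a bijection
  \<open>f\<^sub>2\<close> between the coset sets, whose inverse serves as \<open>r\<^sub>2\<close>. For \<open>r\<^sub>1\<close> take a coarse
  inverse of \<open>q\<close>, sending \<open>h\<close> to some \<open>g\<close> with \<open>q g\<close> within \<open>C\<close> of \<open>h\<close>. Because \<open>q\<close> is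
  coarsely injective, \<open>r\<^sub>1\<close> is coarsely Lipschitz, and the same estimate puts \<open>r\<^sub>1 ` B\<close> within
  bounded Hausdorff distance of \<open>r\<^sub>2 B\<close>. For (ii), a strong quasi-isometry \<open>f\<^sub>1\<close> has the
  coarse inverse \<open>r\<^sub>1\<close>, so it is a quasi-isometry, and \<^const>\<open>qdot\<close> contains both the graph
  of \<open>f\<^sub>2\<close> and the transposed graph of \<open>r\<^sub>2\<close>, so both projections are onto.\<close>

lemma (in monoid) multlist_append:
  assumes "set xs \<subseteq> carrier G" "set ys \<subseteq> carrier G"
  shows "foldr (\<otimes>) (xs @ ys) \<one> = foldr (\<otimes>) xs \<one> \<otimes> foldr (\<otimes>) ys \<one>"
  using assms(1) by (induction xs) (use assms(2) in \<open>simp_all add: m_assoc\<close>)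

lemma (in group) multlist_rev_inv:
  assumes "set xs \<subseteq> carrier G"
  shows "foldr (\<otimes>) (rev (map (m_inv G) xs)) \<one> = inv (foldr (\<otimes>) xs \<one>)"
  using assms
proof (induction xs)
  case (Cons a xs)
  then have "set (rev (map (m_inv G) xs)) \<subseteq> carrier G" by auto
  with Cons show ?case by (simp del: foldr_append add: multlist_append inv_mult_group)
qed simp

lemma (in group) generate_imp_word:
  assumes "S \<subseteq> carrier G" "g \<in> generate G S"
  shows "\<exists>ws. set ws \<subseteq> S \<union> m_inv G ` S \<and> foldr (\<otimes>) ws \<one> = g"
  using assms(2)
proof (induction rule: generate.induct)
  case one
  show ?case by (rule exI[of _ "[]"]) simp
next
  case (incl h)
  then show ?case using assms(1) by (intro exI[of _ "[h]"]) auto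
next
  case (inv h)
  then show ?case using assms(1) by (intro exI[of _ "[inv h]"]) auto
next
  case (eng h1 h2)
  then obtain w1 w2 where "set w1 \<subseteq> S \<union> m_inv G ` S" "foldr (\<otimes>) w1 \<one> = h1"
    and "set w2 \<subseteq> S \<union> m_inv G ` S" "foldr (\<otimes>) w2 \<one> = h2" by blast
  moreover have "set w1 \<subseteq> carrier G" "set w2 \<subseteq> carrier G"
    using calculation(1,3) assms(1) by auto
  ultimately show ?case
    by (intro exI[of _ "w1 @ w2"]) (auto simp del: foldr_append simp add: multlist_append)
qed

locale word_metric = group G for G (structure) +
  fixes S :: "'a set"
  assumes generators_closed: "S \<subseteq> carrier G"
    and generate_eq: "generate G S = carrier G"
begin

lemma letters_closed: "S \<union> m_inv G ` S \<subseteq> carrier G"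
  using generators_closed by auto

lemma word_length_le:
  assumes "set ws \<subseteq> S \<union> m_inv G ` S"
  shows "word_length G S (foldr (\<otimes>) ws \<one>) \<le> length ws"
  unfolding word_length_def using assms by (intro Least_le) blast

lemma shortest_word:
  assumes "g \<in> carrier G"
  obtains ws where "length ws = word_length G S g" "set ws \<subseteq> S \<union> m_inv G ` S" "foldr (\<otimes>) ws \<one> = g"
proof -
  have "\<exists>n ws. length ws = n \<and> set ws \<subseteq> S \<union> m_inv G ` S \<and> foldr (\<otimes>) ws \<one> = g"
    using generate_imp_word[OF generators_closed] generate_eq assms by blast
  from LeastI_ex[OF this] show ?thesis using that unfolding word_length_def by blast
qed

lemma word_length_one: "word_length G S \<one> = 0"
  using word_length_le[of "[]"] by simp

lemma word_length_mult:
  assumes "g \<in> carrier G" "h \<in> carrier G"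
  shows "word_length G S (g \<otimes> h) \<le> word_length G S g + word_length G S h"
proof -
  obtain v where v: "length v = word_length G S g" "set v \<subseteq> S \<union> m_inv G ` S" "foldr (\<otimes>) v \<one> = g"
    by (rule shortest_word[OF assms(1)])
  obtain w where w: "length w = word_length G S h" "set w \<subseteq> S \<union> m_inv G ` S" "foldr (\<otimes>) w \<one> = h"
    by (rule shortest_word[OF assms(2)])
  have "set v \<subseteq> carrier G" "set w \<subseteq> carrier G"
    using v(2) w(2) letters_closed by auto
  then have "foldr (\<otimes>) (v @ w) \<one> = g \<otimes> h"
    using v(3) w(3) by (simp del: foldr_append add: multlist_append)
  with word_length_le[of "v @ w"] v w show ?thesis by simp
qed

lemma word_length_inv:
  assumes "g \<in> carrier G"
  shows "word_length G S (inv g) = word_length G S g"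
proof -
  have le: "word_length G S (inv x) \<le> word_length G S x" if x: "x \<in> carrier G" for x
  proof -
    obtain w where w: "length w = word_length G S x" "set w \<subseteq> S \<union> m_inv G ` S" "foldr (\<otimes>) w \<one> = x"
      by (rule shortest_word[OF x])
    have "set (rev (map (m_inv G) w)) \<subseteq> S \<union> m_inv G ` S"
      using w(2) generators_closed by (auto simp: subset_iff)
    with word_length_le[of "rev (map (m_inv G) w)"] w letters_closed show ?thesis
      by (simp add: multlist_rev_inv)
  qed
  show ?thesis using le[of g] le[of "inv g"] assms by simp
qed

lemma wdist_self: "x \<in> carrier G \<Longrightarrow> wdist G S x x = 0"
  by (simp add: wdist_def word_length_one)

lemma wdist_commute:
  assumes "x \<in> carrier G" "y \<in> carrier G"
  shows "wdist G S x y = wdist G S y x"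
proof -
  have "inv (inv x \<otimes> y) = inv y \<otimes> x"
    using assms by (simp add: inv_mult_group)
  then show ?thesis
    using word_length_inv[of "inv x \<otimes> y"] assms by (simp add: wdist_def)
qed

lemma wdist_triangle:
  assumes "x \<in> carrier G" "y \<in> carrier G" "z \<in> carrier G"
  shows "wdist G S x z \<le> wdist G S x y + wdist G S y z"
proof -
  have "inv x \<otimes> z = (inv x \<otimes> y) \<otimes> (inv y \<otimes> z)"
    using assms by (simp add: m_assoc flip: m_assoc[of y "inv y"])
  then show ?thesis
    using word_length_mult[of "inv x \<otimes> y" "inv y \<otimes> z"] assms by (simp add: wdist_def)
qed

end

lemma word_metric_if_group_pair: "group_pair G S Ps \<Longrightarrow> word_metric G S"
  by (simp add: group_pair_def word_metric_def word_metric_axioms_def)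

lemma coset_subset_carrier:
  assumes "group_pair G S Ps" "A \<in> cosets G Ps"
  shows "snd A \<subseteq> carrier G"
proof -
  obtain i a where "A = (i, a <#\<^bsub>G\<^esub> (Ps ! i))" "i < length Ps" "a \<in> carrier G"
    using assms(2) unfolding cosets_def by blast
  moreover have "group G" "subgroup (Ps ! i) G"
    using assms(1) \<open>i < length Ps\<close> unfolding group_pair_def by auto
  ultimately show ?thesis by (simp add: group.l_coset_subset_G subgroup.subset)
qed

lemma hausdorff_le:
  assumes "\<forall>a\<in>A. \<exists>b\<in>B. wdist G S a b \<le> K" "\<forall>b\<in>B. \<exists>a\<in>A. wdist G S a b \<le> K"
  shows "hausdorff G S A B \<le> ereal K"
  unfolding hausdorff_def
proof (intro max.boundedI SUP_least)
  fix a assume "a \<in> A"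
  with assms(1) obtain b where "b \<in> B" "wdist G S a b \<le> K" by blast
  then show "(INF b\<in>B. ereal (wdist G S a b)) \<le> ereal K" by (intro INF_lower2) simp_all
next
  fix b assume "b \<in> B"
  with assms(2) obtain a where "a \<in> A" "wdist G S a b \<le> K" by blast
  then show "(INF a\<in>A. ereal (wdist G S a b)) \<le> ereal K" by (intro INF_lower2) simp_all
qed

lemma hausdorff_less_left:
  assumes "hausdorff G S A B < ereal M" "a \<in> A"
  shows "\<exists>b\<in>B. wdist G S a b < M"
proof -
  have "(INF b\<in>B. ereal (wdist G S a b)) < ereal M"
    using SUP_upper[OF assms(2)] assms(1) unfolding hausdorff_def by (meson max.strict_boundedE order.strict_trans1)
  then show ?thesis by (simp add: INF_less_iff)
qed

lemma hausdorff_less_right: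
  assumes "hausdorff G S A B < ereal M" "b \<in> B"
  shows "\<exists>a\<in>A. wdist G S a b < M"
proof -
  have "(INF a\<in>A. ereal (wdist G S a b)) < ereal M"
    using SUP_upper[OF assms(2)] assms(1) unfolding hausdorff_def by (meson max.strict_boundedE order.strict_trans1)
  then show ?thesis by (simp add: INF_less_iff)
qed

lemma hausdorff_image_le:
  assumes "hausdorff H T (q ` A) B < ereal M"
    and "\<And>a b. a \<in> A \<Longrightarrow> b \<in> B \<Longrightarrow> wdist H T (q a) b < M \<Longrightarrow> wdist G S (r b) a \<le> K"
  shows "hausdorff G S (r ` B) A \<le> ereal K"
proof (rule hausdorff_le)
  show "\<forall>x\<in>r ` B. \<exists>a\<in>A. wdist G S x a \<le> K"
    using hausdorff_less_right[OF assms(1)] assms(2) by blast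
  show "\<forall>a\<in>A. \<exists>x\<in>r ` B. wdist G S x a \<le> K"
    using hausdorff_less_left[OF assms(1)] assms(2) by blast
qed

lemma quasi_isometry_dist_le:
  assumes "quasi_isometry G S H T L C q" "L > 0" "x \<in> carrier G" "y \<in> carrier G"
  shows "wdist G S x y \<le> L * (wdist H T (q x) (q y) + C)"
proof -
  have "wdist G S x y / L \<le> wdist H T (q x) (q y) + C"
    using assms(1,3,4) unfolding quasi_isometry_def by fastforce
  with assms(2) show ?thesis by (simp add: divide_le_eq mult.commute)
qed

lemma quasi_isometry_lipschitz_map:
  "quasi_isometry G S H T L C q \<Longrightarrow> lipschitz_map G S H T L C q"
  unfolding quasi_isometry_def lipschitz_map_def by blast

locale quasi_isometry_inverse =
  fixes G :: "('a, 'b) monoid_scheme" and S :: "'a set"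
    and H :: "('c, 'd) monoid_scheme" and T :: "'c set"
    and L C :: real and q :: "'a \<Rightarrow> 'c" and r :: "'c \<Rightarrow> 'a"
  assumes target_word_metric: "word_metric H T"
    and qi: "quasi_isometry G S H T L C q"
    and L_pos: "L > 0"
    and inverse_closed: "r ` carrier H \<subseteq> carrier G"
    and inverse_near: "\<forall>h\<in>carrier H. wdist H T (q (r h)) h \<le> C"
begin

lemma q_closed: "x \<in> carrier G \<Longrightarrow> q x \<in> carrier H"
  using qi unfolding quasi_isometry_def by blast

lemma inverse_dist_le:
  assumes "a \<in> carrier G" "b \<in> carrier H" "wdist H T (q a) b \<le> D"
  shows "wdist G S (r b) a \<le> L * (D + 2 * C)"
proof -
  interpret H: word_metric H T by (rule target_word_metric)
  have rb: "r b \<in> carrier G" "wdist H T (q (r b)) b \<le> C"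
    using inverse_closed inverse_near assms(2) by auto
  have "wdist H T (q (r b)) (q a) \<le> wdist H T (q (r b)) b + wdist H T b (q a)"
    using rb assms by (intro H.wdist_triangle q_closed)
  also have "wdist H T b (q a) = wdist H T (q a) b"
    using assms by (intro H.wdist_commute q_closed)
  finally have "wdist H T (q (r b)) (q a) + C \<le> D + 2 * C"
    using rb assms(3) by linarith
  then have "L * (wdist H T (q (r b)) (q a) + C) \<le> L * (D + 2 * C)"
    using L_pos by (intro mult_left_mono) auto
  moreover have "wdist G S (r b) a \<le> L * (wdist H T (q (r b)) (q a) + C)"
    using quasi_isometry_dist_le[OF qi] L_pos rb assms(1) by simp
  ultimately show ?thesis by linarith
qed

lemma inverse_retraction: "g \<in> carrier G \<Longrightarrow> wdist G S (r (q g)) g \<le> 2 * L * C"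
  using inverse_dist_le[of g "q g" 0] word_metric.wdist_self[OF target_word_metric] q_closed
  by simp

lemma inverse_lipschitz_map: "lipschitz_map H T G S L (3 * L * C) r"
  unfolding lipschitz_map_def
proof (intro conjI ballI)
  fix x y assume xy: "x \<in> carrier H" "y \<in> carrier H"
  interpret H: word_metric H T by (rule target_word_metric)
  have ry: "r y \<in> carrier G" "wdist H T (q (r y)) y \<le> C"
    using inverse_closed inverse_near xy(2) by auto
  have "wdist H T (q (r y)) x \<le> wdist H T (q (r y)) y + wdist H T y x"
    using xy ry by (intro H.wdist_triangle q_closed)
  also have "wdist H T y x = wdist H T x y"
    using xy by (rule H.wdist_commute[symmetric])
  finally have "wdist H T (q (r y)) x \<le> wdist H T x y + C"
    using ry by linarith
  from inverse_dist_le[OF ry(1) xy(1) this]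
  show "wdist G S (r x) (r y) \<le> L * wdist H T x y + 3 * L * C"
    by (simp add: algebra_simps)
qed (use inverse_closed in auto)

lemma inverse_hausdorff_le:
  assumes "group_pair G S Ps" "group_pair H T Qs" "(A, B) \<in> qdot G Ps H T Qs M q"
  shows "hausdorff G S (r ` snd B) (snd A) \<le> ereal (L * (M + 2 * C))"
proof (rule hausdorff_image_le)
  show "hausdorff H T (q ` snd A) (snd B) < ereal M"
    using assms(3) unfolding qdot_def by simp
  fix a b assume "a \<in> snd A" "b \<in> snd B" "wdist H T (q a) b < M"
  moreover have "snd A \<subseteq> carrier G" "snd B \<subseteq> carrier H"
    using assms(3) coset_subset_carrier[OF assms(1)] coset_subset_carrier[OF assms(2)]
    unfolding qdot_def by auto
  ultimately show "wdist G S (r b) a \<le> L * (M + 2 * C)"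
    by (intro inverse_dist_le) auto
qed

lemma inverse_lipschitz_pairs:
  assumes "group_pair G S Ps" "group_pair H T Qs"
    and r2: "\<forall>B\<in>cosets H Qs. (r2 B, B) \<in> qdot G Ps H T Qs M q"
  \<comment> \<open>The \<open>+ 1\<close> is needed because Hausdorff bounds in \<^const>\<open>lipschitz_pairs\<close> are strict.\<close>
  shows "lipschitz_pairs H T Qs G S Ps L (3 * L * C) (L * (M + 2 * C) + 1) r r2"
proof -
  have "hausdorff G S (r ` snd B) (snd (r2 B)) < ereal (L * (M + 2 * C) + 1)"
    if "B \<in> cosets H Qs" for B
  proof -
    have "hausdorff G S (r ` snd B) (snd (r2 B)) \<le> ereal (L * (M + 2 * C))"
      using inverse_hausdorff_le[OF assms(1,2)] r2 that by blast
    also have "\<dots> < ereal (L * (M + 2 * C) + 1)" by simp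
    finally show ?thesis .
  qed
  then show ?thesis
    using inverse_lipschitz_map r2 unfolding lipschitz_pairs_def qdot_def by auto
qed

end

lemma dist_le_if_quasi_retraction:
  assumes "word_metric G S" "f ` carrier G \<subseteq> carrier H" "lipschitz_map H T G S L C r"
    and rf: "\<forall>g\<in>carrier G. wdist G S (r (f g)) g \<le> C"
    and xy: "x \<in> carrier G" "y \<in> carrier G"
  shows "wdist G S x y \<le> L * wdist H T (f x) (f y) + 3 * C"
proof -
  interpret G: word_metric G S by fact
  have fxy: "f x \<in> carrier H" "f y \<in> carrier H"
    using assms(2) xy by auto
  then have rfxy: "r (f x) \<in> carrier G" "r (f y) \<in> carrier G"
    using assms(3) unfolding lipschitz_map_def by auto
  have "wdist G S x y \<le> wdist G S x (r (f x)) + wdist G S (r (f x)) (r (f y)) + wdist G S (r (f y)) y"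
    using G.wdist_triangle[of x "r (f x)" y] G.wdist_triangle[of "r (f x)" "r (f y)" y] xy rfxy
    by linarith
  also have "\<dots> \<le> C + (L * wdist H T (f x) (f y) + C) + C"
    using assms(3) rf xy fxy rfxy G.wdist_commute[of x "r (f x)"]
    unfolding lipschitz_map_def by (intro add_mono) auto
  finally show ?thesis by simp
qed

lemma quasi_isometry_if_quasi_inverse:
  assumes "word_metric G S" "L \<ge> 1" "C \<ge> 0"
    and f: "lipschitz_map G S H T L C f" and r: "lipschitz_map H T G S L C r"
    and rf: "\<forall>g\<in>carrier G. wdist G S (r (f g)) g \<le> C"
    and fr: "\<forall>h\<in>carrier H. wdist H T (f (r h)) h \<le> C"
  shows "quasi_isometry G S H T L (3 * C) f"
  unfolding quasi_isometry_def
proof (intro conjI ballI)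
  fix x y assume xy: "x \<in> carrier G" "y \<in> carrier G"
  have "wdist G S x y / L \<le> (L * wdist H T (f x) (f y) + 3 * C) / L"
    using dist_le_if_quasi_retraction[OF assms(1) _ r rf xy] f \<open>L \<ge> 1\<close>
    unfolding lipschitz_map_def by (intro divide_right_mono) auto
  also have "\<dots> = wdist H T (f x) (f y) + 3 * C / L"
    using \<open>L \<ge> 1\<close> by (simp add: add_divide_distrib)
  also have "3 * C / L \<le> 3 * C"
    using \<open>L \<ge> 1\<close> \<open>C \<ge> 0\<close> by (simp add: divide_le_eq mult_le_cancel_left1)
  finally show "wdist G S x y / L - 3 * C \<le> wdist H T (f x) (f y)"
    by simp
  show "wdist H T (f x) (f y) \<le> L * wdist G S x y + 3 * C"
    using f xy \<open>C \<ge> 0\<close> unfolding lipschitz_map_def by fastforce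
next
  fix h assume "h \<in> carrier H"
  then show "\<exists>g\<in>carrier G. wdist H T (f g) h \<le> 3 * C"
    using r fr \<open>C \<ge> 0\<close> unfolding lipschitz_map_def by (intro bexI[of _ "r h"]) fastforce+
qed (use f in \<open>simp add: lipschitz_map_def\<close>)

lemma bij_betw_projections_obtain_inverse_maps:
  assumes "bij_betw fst R A" "bij_betw snd R B"
  obtains f g where "\<forall>x\<in>A. (x, f x) \<in> R" "\<forall>y\<in>B. (g y, y) \<in> R"
    "\<forall>x\<in>A. g (f x) = x" "\<forall>y\<in>B. f (g y) = y"
proof
  define f where "f x = snd (inv_into R fst x)" for x
  define g where "g y = fst (inv_into R snd y)" for y
  have fst: "inj_on fst R" "fst ` R = A" and snd: "inj_on snd R" "snd ` R = B"
    using assms unfolding bij_betw_def by auto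
  have "(x, f x) = inv_into R fst x" if "x \<in> A" for x
    using f_inv_into_f[of x fst R] fst(2) that unfolding f_def by (simp add: prod_eq_iff)
  then show graph_f: "\<forall>x\<in>A. (x, f x) \<in> R"
    using inv_into_into[of _ fst R] fst(2) by auto
  have "(g y, y) = inv_into R snd y" if "y \<in> B" for y
    using f_inv_into_f[of y snd R] snd(2) that unfolding g_def by (simp add: prod_eq_iff)
  then show graph_g: "\<forall>y\<in>B. (g y, y) \<in> R"
    using inv_into_into[of _ snd R] snd(2) by auto
  show "\<forall>x\<in>A. g (f x) = x"
    using graph_f inv_into_f_f[OF snd(1)] unfolding g_def by fastforce
  show "\<forall>y\<in>B. f (g y) = y"
    using graph_g inv_into_f_f[OF fst(1)] unfolding f_def by fastforce
qed

lemma lipschitz_pairs_mono: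
  assumes "lipschitz_pairs G S Ps H T Qs L C M f1 f2" "C \<le> C'" "M \<le> M'"
  shows "lipschitz_pairs G S Ps H T Qs L C' M' f1 f2"
proof -
  have "ereal M \<le> ereal M'" using assms(3) by simp
  with assms show ?thesis
    unfolding lipschitz_pairs_def lipschitz_map_def
    by (smt (verit, ccfv_threshold) order_less_le_trans)
qed

lemma lipschitz_pairs_if_qdot_graph:
  assumes "quasi_isometry G S H T L C q" "\<forall>A\<in>cosets G Ps. (A, f2 A) \<in> qdot G Ps H T Qs M q"
  shows "lipschitz_pairs G S Ps H T Qs L C M q f2"
  using assms quasi_isometry_lipschitz_map unfolding lipschitz_pairs_def qdot_def by blast

lemma pairs_quasi_isometric_if_strongly:
  assumes "group_pair G S Ps" "pairs_strongly_quasi_isometric G S Ps H T Qs"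
  shows "pairs_quasi_isometric G S Ps H T Qs"
proof -
  obtain L C M f1 f2 r1 r2 where LCM: "L \<ge> 1" "C \<ge> 0" "M \<ge> 0"
    and fr: "quasi_retraction_pairs G S Ps H T Qs L C M f1 f2 r1 r2"
    and rf: "quasi_retraction_pairs H T Qs G S Ps L C M r1 r2 f1 f2"
    using assms(2) unfolding pairs_strongly_quasi_isometric_def strong_qi_pairs_def by blast
  have "quasi_isometry G S H T L (3 * C) f1"
    using fr rf LCM word_metric_if_group_pair[OF assms(1)]
    unfolding quasi_retraction_pairs_def lipschitz_pairs_def
    by (intro quasi_isometry_if_quasi_inverse) auto
  moreover have "fst ` qdot G Ps H T Qs M f1 = cosets G Ps"
    and "snd ` qdot G Ps H T Qs M f1 = cosets H Qs"
  proof -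
    have qdot_sub: "qdot G Ps H T Qs M f1 \<subseteq> cosets G Ps \<times> cosets H Qs"
      unfolding qdot_def by auto
    have f2_graph: "\<forall>A\<in>cosets G Ps. (A, f2 A) \<in> qdot G Ps H T Qs M f1"
      using fr unfolding quasi_retraction_pairs_def lipschitz_pairs_def qdot_def by auto
    have "r2 ` cosets H Qs \<subseteq> cosets G Ps" "\<forall>B\<in>cosets H Qs. f2 (r2 B) = B"
      using rf unfolding quasi_retraction_pairs_def lipschitz_pairs_def by auto
    with f2_graph have r2_graph: "\<forall>B\<in>cosets H Qs. (r2 B, B) \<in> qdot G Ps H T Qs M f1"
      by (metis image_subset_iff)
    show "fst ` qdot G Ps H T Qs M f1 = cosets G Ps"
      using qdot_sub f2_graph by (force simp: image_iff)
    show "snd ` qdot G Ps H T Qs M f1 = cosets H Qs"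
      using qdot_sub r2_graph by (force simp: image_iff)
  qed
  ultimately show ?thesis
    unfolding pairs_quasi_isometric_def qi_pairs_def using LCM
    by (intro exI[of _ L] exI[of _ "3 * C"] exI[of _ M] exI[of _ f1]) auto
qed

lemma pairs_strongly_quasi_isometric_if_qdot_bij:
  assumes G: "group_pair G S Ps" and H: "group_pair H T Qs"
    and LCM: "L \<ge> 1" "C \<ge> 0" "M \<ge> 0" and q: "qi_pairs G S Ps H T Qs L C M q"
    and bij: "bij_betw fst (qdot G Ps H T Qs M q) (cosets G Ps)"
      "bij_betw snd (qdot G Ps H T Qs M q) (cosets H Qs)"
  shows "pairs_strongly_quasi_isometric G S Ps H T Qs"
proof -
  obtain f2 r2 where f2: "\<forall>A\<in>cosets G Ps. (A, f2 A) \<in> qdot G Ps H T Qs M q"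
    and r2: "\<forall>B\<in>cosets H Qs. (r2 B, B) \<in> qdot G Ps H T Qs M q"
    and r2_f2: "\<forall>A\<in>cosets G Ps. r2 (f2 A) = A" and f2_r2: "\<forall>B\<in>cosets H Qs. f2 (r2 B) = B"
    using bij_betw_projections_obtain_inverse_maps[OF bij] .
  have qi: "quasi_isometry G S H T L C q"
    using q unfolding qi_pairs_def by blast
  then obtain r where "r ` carrier H \<subseteq> carrier G" "\<forall>h\<in>carrier H. wdist H T (q (r h)) h \<le> C"
    unfolding quasi_isometry_def by (metis (mono_tags) bchoice image_subsetI)
  then interpret quasi_isometry_inverse G S H T L C q r
    using qi LCM word_metric_if_group_pair[OF H] by (simp add: quasi_isometry_inverse_def)
  define C' where "C' = 3 * L * C"
  define M' where "M' = L * (M + 2 * C) + 1"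
  have "C \<le> C'" "2 * L * C \<le> C'" "M \<le> M'"
    using LCM mult_right_mono[of 1 L C] mult_right_mono[of 1 L M]
    unfolding C'_def M'_def by (auto simp: algebra_simps)
  have lip_q: "lipschitz_pairs G S Ps H T Qs L C' M' q f2"
    using lipschitz_pairs_mono[OF lipschitz_pairs_if_qdot_graph[OF qi f2]] \<open>C \<le> C'\<close> \<open>M \<le> M'\<close> .
  have lip_r: "lipschitz_pairs H T Qs G S Ps L C' M' r r2"
    unfolding C'_def M'_def using inverse_lipschitz_pairs[OF G H r2] .
  have "\<forall>g\<in>carrier G. wdist G S (r (q g)) g \<le> C'" "\<forall>h\<in>carrier H. wdist H T (q (r h)) h \<le> C'"
    using inverse_retraction inverse_near \<open>2 * L * C \<le> C'\<close> \<open>C \<le> C'\<close> by force+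
  moreover have "C' \<ge> 0" "M' \<ge> 0"
    using LCM \<open>C \<le> C'\<close> \<open>M \<le> M'\<close> by linarith+
  ultimately show ?thesis
    using lip_q lip_r r2_f2 f2_r2 \<open>L \<ge> 1\<close>
    unfolding pairs_strongly_quasi_isometric_def strong_qi_pairs_def quasi_retraction_pairs_def
    by blast
qed

theorem lemma2p6:
  fixes G :: "('a, 'b) monoid_scheme" and H :: "('c, 'd) monoid_scheme"
    and S :: "'a set" and T :: "'c set" and Ps :: "'a set list" and Qs :: "'c set list"
  assumes "group_pair G S Ps" and "group_pair H T Qs"
  shows "(\<forall>L C M q. L \<ge> 1 \<and> C \<ge> 0 \<and> M \<ge> 0 \<and> qi_pairs G S Ps H T Qs L C M q \<and>
             bij_betw fst (qdot G Ps H T Qs M q) (cosets G Ps) \<and>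
             bij_betw snd (qdot G Ps H T Qs M q) (cosets H Qs)
           \<longrightarrow> pairs_strongly_quasi_isometric G S Ps H T Qs)
       \<and> (pairs_strongly_quasi_isometric G S Ps H T Qs \<longrightarrow> pairs_quasi_isometric G S Ps H T Qs)"
  using pairs_strongly_quasi_isometric_if_qdot_bij[OF assms] pairs_quasi_isometric_if_strongly[OF assms(1)]
  by blast

end
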